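(* Let $I\subset\mathbb R$ be an open interval, $r:I\to\mathbb R$ a smooth positive function, $C\neq 0$ a constant, $\eta\in\{1,-1\}$, and fix one choice of sign $\pm$. Assume that $$R(u):=(r r''+(r')^2+1)^2 \pm 4C^2 r^2\,(1+(r')^2)>0 \quad\text{on } I.$$ Let $\varphi:I\to\mathbb R$ be any function with $$\varphi'(u)=\eta\,\frac{\sqrt{R(u)}}{r(u)\,(1+r'(u)^2)},$$ and let $x_1,x_2:I\to\mathbb R$ be any functions with $$x_1'(u)=\sqrt{1+r'(u)^2}\,\cos\varphi(u),\qquad x_2'(u)=\sqrt{1+r'(u)^2}\,\sin\varphi(u).$$ Then $c(u)=(x_1(u),x_2(u),r(u),0)$ is a spacelike curve parameterized by arc-length with $x_1'x_2''-x_1''x_2'\neq 0$ on $I$, and the rotational surface of elliptic type $z(u,v)=(x_1(u),x_2(u),r(u)\cos v,r(u)\sin v)$ generated by $c$ is a Lorentz surface in $\mathbb E^4_2$ with constant mean curvature, namely $\langle H,H\rangle=\pm C^2$ (the same sign as chosen in $R$). Conversely, let $z(u,v)=(x_1(u),x_2(u),r(u)\cos v,r(u)\sin v)$, $u\in J$, $v\in[0,2\pi)$, be a rotational surface of elliptic type whose generating curve $(x_1,x_2,r,0)$ is spacelike, parameterized by arc-length ($(x_1')^2+(x_2')^2-(r')^2=1$), with $r>0$, and suppose $x_1'x_2''-x_1''x_2'\neq0$ on an open interval $I\subset J$ and the surface has constant mean curvature ($\langle H,H\rangle$ a nonzero constant) on $I$. Then on $I$ the functions $x_1,x_2$ arise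 from $r$ exactly by the construction above for some constant $C\neq0$, some sign $\pm$, some $\eta\in\{\pm1\}$ and suitable constants of integration.
   Context: $\mathbb E^4_2$ is $\mathbb R^4$ with the neutral metric $\langle\cdot,\cdot\rangle$ given by $g_0=dx_1^2+dx_2^2-dx_3^2-dx_4^2$. A vector $v$ is spacelike if $\langle v,v\rangle>0$, timelike if $\langle v,v\rangle<0$. A surface in $\mathbb E^4_2$ is Lorentz if its induced metric has signature $(1,1)$ (then its normal space also has signature $(1,1)$). For a surface with second fundamental form $\sigma$, the mean curvature vector is $H=\frac12\operatorname{tr}\sigma$ (trace with respect to the induced metric); the surface is said to have constant mean curvature if $\langle H,H\rangle$ is a nonzero constant. A rotational surface of elliptic type is a surface $z(u,v)=(x_1(u),x_2(u),r(u)\cos v,r(u)\sin v)$ obtained by rotating a curve $(x_1(u),x_2(u),r(u),0)$ with $r>0$ about the plane spanned by $e_1=(1,0,0,0)$ and $e_2=(0,1,0,0)$. *)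

theory Defs
  imports "HOL-Analysis.Analysis"
begin

definition nip :: "real^4 \<Rightarrow> real^4 \<Rightarrow> real" where
  "nip a b = a$1 * b$1 + a$2 * b$2 - a$3 * b$3 - a$4 * b$4"

definition smooth_on :: "(real \<Rightarrow> real) \<Rightarrow> real set \<Rightarrow> bool" where
  "smooth_on f S \<longleftrightarrow> (\<forall>k. \<forall>u\<in>S. ((deriv ^^ k) f) differentiable (at u))"

definition open_interval :: "real set \<Rightarrow> bool" where
  "open_interval I \<longleftrightarrow> is_interval I \<and> open I \<and> I \<noteq> {}"

definition rot_surf :: "(real \<Rightarrow> real) \<Rightarrow> (real \<Rightarrow> real) \<Rightarrow> (real \<Rightarrow> real)
    \<Rightarrow> real \<Rightarrow> real \<Rightarrow> real^4" where
  "rot_surf x1 x2 r u v = vector [x1 u, x2 u, r u * cos v, r u * sin v]"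

definition gen_curve :: "(real \<Rightarrow> real) \<Rightarrow> (real \<Rightarrow> real) \<Rightarrow> (real \<Rightarrow> real)
    \<Rightarrow> real \<Rightarrow> real^4" where
  "gen_curve x1 x2 r u = vector [x1 u, x2 u, r u, 0]"

definition pu :: "(real \<Rightarrow> real \<Rightarrow> real^4) \<Rightarrow> real \<Rightarrow> real \<Rightarrow> real^4" where
  "pu z u v = vector_derivative (\<lambda>t. z t v) (at u)"

definition pv :: "(real \<Rightarrow> real \<Rightarrow> real^4) \<Rightarrow> real \<Rightarrow> real \<Rightarrow> real^4" where
  "pv z u v = vector_derivative (\<lambda>t. z u t) (at v)"

definition fE where "fE z u v = nip (pu z u v) (pu z u v)"
definition fF where "fF z u v = nip (pu z u v) (pv z u v)"
definition fG where "fG z u v = nip (pv z u v) (pv z u v)"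

text \<open>Lorentz surface at (u,v): the induced metric on the tangent plane
  spanned by z_u, z_v has signature (1,1), i.e. there is an orthogonal basis
  of the tangent plane consisting of a spacelike and a timelike vector.\<close>
definition lorentz_at :: "(real \<Rightarrow> real \<Rightarrow> real^4) \<Rightarrow> real \<Rightarrow> real \<Rightarrow> bool" where
  "lorentz_at z u v \<longleftrightarrow> (\<exists>a b c d.
     let e1 = a *\<^sub>R pu z u v + b *\<^sub>R pv z u v;
         e2 = c *\<^sub>R pu z u v + d *\<^sub>R pv z u v
     in nip e1 e1 > 0 \<and> nip e2 e2 < 0 \<and> nip e1 e2 = 0)"

text \<open>Normal component of a vector w with respect to the tangent plane at (u,v)
  (orthogonal projection w.r.t. the neutral metric).\<close>
definition nrm :: "(real \<Rightarrow> real \<Rightarrow> real^4) \<Rightarrow> real \<Rightarrow> real \<Rightarrow> real^4 \<Rightarrow> real^4" where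
  "nrm z u v w =
    (let E = fE z u v; F = fF z u v; G = fG z u v; D = E * G - F^2;
         p = nip w (pu z u v); q = nip w (pv z u v);
         a = (G * p - F * q) / D; b = (E * q - F * p) / D
     in w - (a *\<^sub>R pu z u v + b *\<^sub>R pv z u v))"

text \<open>Mean curvature vector H = (1/2) tr sigma, where
  sigma(z_i,z_j) = normal part of z_ij and the trace is with respect to the induced metric.\<close>
definition mean_curv :: "(real \<Rightarrow> real \<Rightarrow> real^4) \<Rightarrow> real \<Rightarrow> real \<Rightarrow> real^4" where
  "mean_curv z u v =
    (let E = fE z u v; F = fF z u v; G = fG z u v; D = E * G - F^2;
         suu = nrm z u v (pu (pu z) u v);
         suv = nrm z u v (pv (pu z) u v);
         svv = nrm z u v (pv (pv z) u v)
     in (1 / (2 * D)) *\<^sub>R (G *\<^sub>R suu - (2 * F) *\<^sub>R suv + E *\<^sub>R svv))"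

text \<open>The function R(u); the sign +/- is encoded by s \<in> {1,-1}.\<close>
definition Rfun :: "real \<Rightarrow> real \<Rightarrow> (real \<Rightarrow> real) \<Rightarrow> real \<Rightarrow> real" where
  "Rfun s C r u = (r u * deriv (deriv r) u + (deriv r u)^2 + 1)^2
                  + s * 4 * C^2 * (r u)^2 * (1 + (deriv r u)^2)"

end

theory Submission
  imports Defs
begin

text \<open>With an arc-length generating curve the induced metric of the rotational surface is
  \<open>E = 1, F = 0, G = -r\<^sup>2\<close>, so the surface is Lorentz, and a direct computation of the mean
  curvature vector, combined with Lagrange's identity
  \<open>|c'|\<^sup>2 |c''|\<^sup>2 = W\<^sup>2 + (c' \<cdot> c'')\<^sup>2\<close> for the planar part \<open>c = (x\<^sub>1, x\<^sub>2)\<close>, yields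
  \<open>4 r\<^sup>2 (1 + r'\<^sup>2) \<langle>H,H\<rangle> = r\<^sup>2 W\<^sup>2 - (r r'' + r'\<^sup>2 + 1)\<^sup>2\<close> with \<open>W = x\<^sub>1' x\<^sub>2'' - x\<^sub>1'' x\<^sub>2'\<close>.
  Hence \<open>\<langle>H,H\<rangle> = \<plusminus>C\<^sup>2\<close> exactly when \<open>r\<^sup>2 W\<^sup>2 = R\<close>. Writing
  \<open>(x\<^sub>1', x\<^sub>2') = \<surd>(1 + r'\<^sup>2) (cos \<phi>, sin \<phi>)\<close> gives \<open>W = (1 + r'\<^sup>2) \<phi>'\<close>, which settles the
  first part. For the converse, \<open>\<phi>\<close> is a continuous lift of the unit vector
  \<open>(x\<^sub>1', x\<^sub>2') / \<surd>(1 + r'\<^sup>2)\<close> to the angle line, and \<open>\<eta>\<close> is the sign of \<open>W\<close>, which is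
  constant because \<open>W\<close> is continuous and does not vanish.\<close>

lemma vector_4_nth [simp]:
  "(vector [x, y, z, w] :: ('a::zero)^4) $ 1 = x"
  "(vector [x, y, z, w] :: ('a::zero)^4) $ 2 = y"
  "(vector [x, y, z, w] :: ('a::zero)^4) $ 3 = z"
  "(vector [x, y, z, w] :: ('a::zero)^4) $ 4 = w"
  unfolding vector_def by simp_all

lemma vector_4_add [simp]:
  "vector [a, b, c, d] + vector [e, f, g, h] = (vector [a + e, b + f, c + g, d + h] :: real^4)"
  by (simp add: vec_eq_iff forall_4)

lemma vector_4_diff [simp]:
  "vector [a, b, c, d] - vector [e, f, g, h] = (vector [a - e, b - f, c - g, d - h] :: real^4)"
  by (simp add: vec_eq_iff forall_4)

lemma vector_4_scaleR [simp]:
  "k *\<^sub>R vector [a, b, c, d] = (vector [k * a, k * b, k * c, k * d] :: real^4)"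
  by (simp add: vec_eq_iff forall_4)

lemma nip_vector_4 [simp]:
  "nip (vector [a, b, c, d]) (vector [e, f, g, h]) = a * e + b * f - c * g - d * h"
  by (simp add: nip_def)

lemma has_vector_derivative_vector_4:
  assumes "(f1 has_real_derivative a) (at x within S)" "(f2 has_real_derivative b) (at x within S)"
    and "(f3 has_real_derivative c) (at x within S)" "(f4 has_real_derivative d) (at x within S)"
  shows "((\<lambda>t. vector [f1 t, f2 t, f3 t, f4 t] :: real^4) has_vector_derivative vector [a, b, c, d])
           (at x within S)"
proof -
  have scale: "((\<lambda>t. f t *\<^sub>R e) has_vector_derivative f' *\<^sub>R e) (at x within S)"
    if "(f has_real_derivative f') (at x within S)" for f f' and e :: "real^4"
    using has_vector_derivative_scaleR[OF that has_vector_derivative_const[of e]] by simp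
  have decompose: "(vector [p, q, s, t] :: real^4) = p *\<^sub>R vector [1, 0, 0, 0]
      + q *\<^sub>R vector [0, 1, 0, 0] + s *\<^sub>R vector [0, 0, 1, 0] + t *\<^sub>R vector [0, 0, 0, 1]"
    for p q s t
    by simp
  have "((\<lambda>t. f1 t *\<^sub>R (vector [1, 0, 0, 0] :: real^4) + f2 t *\<^sub>R vector [0, 1, 0, 0]
      + f3 t *\<^sub>R vector [0, 0, 1, 0] + f4 t *\<^sub>R vector [0, 0, 0, 1]) has_vector_derivative
      a *\<^sub>R vector [1, 0, 0, 0] + b *\<^sub>R vector [0, 1, 0, 0]
      + c *\<^sub>R vector [0, 0, 1, 0] + d *\<^sub>R vector [0, 0, 0, 1]) (at x within S)"
    by (intro has_vector_derivative_add scale assms)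
  then show ?thesis
    by (simp only: decompose[symmetric])
qed

lemma pu_rot_surf:
  assumes "x1 differentiable at u" "x2 differentiable at u" "r differentiable at u"
  shows "pu (rot_surf x1 x2 r) u v =
           vector [deriv x1 u, deriv x2 u, deriv r u * cos v, deriv r u * sin v]"
  unfolding pu_def rot_surf_def
  by (rule vector_derivative_at, rule has_vector_derivative_vector_4)
     (use assms in \<open>auto intro!: derivative_eq_intros simp: DERIV_deriv_iff_real_differentiable\<close>)

lemma pv_rot_surf: "pv (rot_surf x1 x2 r) u v = vector [0, 0, - (r u * sin v), r u * cos v]"
  unfolding pv_def rot_surf_def
  by (rule vector_derivative_at, rule has_vector_derivative_vector_4) (auto intro!: derivative_eq_intros)

lemma pv_pv_rot_surf:
  "pv (pv (rot_surf x1 x2 r)) u v = vector [0, 0, - (r u * cos v), - (r u * sin v)]"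
  unfolding pv_def[of "pv _"] pv_rot_surf
  by (rule vector_derivative_at, rule has_vector_derivative_vector_4) (auto intro!: derivative_eq_intros)

lemma pu_pu_rot_surf:
  assumes "open S" "u \<in> S"
    and "\<And>t. t \<in> S \<Longrightarrow> x1 differentiable at t \<and> x2 differentiable at t \<and> r differentiable at t"
    and "deriv x1 differentiable at u" "deriv x2 differentiable at u" "deriv r differentiable at u"
  shows "pu (pu (rot_surf x1 x2 r)) u v = vector [deriv (deriv x1) u, deriv (deriv x2) u,
           deriv (deriv r) u * cos v, deriv (deriv r) u * sin v]"
proof -
  have "((\<lambda>t. vector [deriv x1 t, deriv x2 t, deriv r t * cos v, deriv r t * sin v] :: real^4)
      has_vector_derivative vector [deriv (deriv x1) u, deriv (deriv x2) u,
        deriv (deriv r) u * cos v, deriv (deriv r) u * sin v]) (at u)"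
    by (rule has_vector_derivative_vector_4)
       (use assms in \<open>auto intro!: derivative_eq_intros simp: DERIV_deriv_iff_real_differentiable\<close>)
  then have "((\<lambda>t. pu (rot_surf x1 x2 r) t v) has_vector_derivative vector [deriv (deriv x1) u,
      deriv (deriv x2) u, deriv (deriv r) u * cos v, deriv (deriv r) u * sin v]) (at u)"
    by (rule has_vector_derivative_transform_within_open[OF _ assms(1,2)])
       (use assms(3) in \<open>simp add: pu_rot_surf\<close>)
  then show ?thesis
    unfolding pu_def[of "pu _"] by (rule vector_derivative_at)
qed

lemma vector_derivative_gen_curve:
  assumes "x1 differentiable at u" "x2 differentiable at u" "r differentiable at u"
  shows "vector_derivative (gen_curve x1 x2 r) (at u) = vector [deriv x1 u, deriv x2 u, deriv r u, 0]"
  unfolding gen_curve_def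
  by (rule vector_derivative_at, rule has_vector_derivative_vector_4)
     (use assms in \<open>auto simp: DERIV_deriv_iff_real_differentiable\<close>)

lemma lorentz_at_if_orthogonal_frame:
  assumes "fE z u v > 0" "fG z u v < 0" "fF z u v = 0"
  shows "lorentz_at z u v"
  unfolding lorentz_at_def Let_def
  by (rule exI[of _ 1], rule exI[of _ 0], rule exI[of _ 0], rule exI[of _ 1])
     (use assms in \<open>simp add: fE_def fF_def fG_def\<close>)

lemma constant_quadratic_form_orthogonal:
  fixes f g h :: "real \<Rightarrow> real"
  assumes "open S" "u \<in> S" "\<And>t. t \<in> S \<Longrightarrow> (f t)^2 + (g t)^2 + k * (h t)^2 = a"
    and "(f has_real_derivative f') (at u)" "(g has_real_derivative g') (at u)"
    and "(h has_real_derivative h') (at u)"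
  shows "f u * f' + g u * g' + k * (h u * h') = 0"
proof -
  have "((\<lambda>t. (f t)^2 + (g t)^2 + k * (h t)^2) has_real_derivative
      2 * (f u * f' + g u * g' + k * (h u * h'))) (at u)"
    using assms(4-6) by (auto intro!: derivative_eq_intros simp: algebra_simps)
  moreover have "((\<lambda>t. (f t)^2 + (g t)^2 + k * (h t)^2) has_real_derivative 0) (at u)"
    by (rule has_field_derivative_transform_within_open[OF DERIV_const assms(1,2)])
       (simp add: assms(3))
  ultimately show ?thesis
    using DERIV_unique by fastforce
qed

lemma has_real_derivative_sqrt_one_plus_square:
  assumes "(f has_real_derivative f') (at u)"
  shows "((\<lambda>t. sqrt (1 + (f t)^2)) has_real_derivative f u * f' / sqrt (1 + (f u)^2)) (at u)"
proof -
  have "1 + (f u)^2 > 0"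
    by (simp add: add_pos_nonneg)
  then show ?thesis
    using assms by (auto intro!: derivative_eq_intros simp: field_simps)
qed

lemma polar_wronskian:
  fixes f g A \<phi> :: "real \<Rightarrow> real"
  assumes S: "open S" "u \<in> S"
    and f: "\<And>t. t \<in> S \<Longrightarrow> deriv f t = A t * cos (\<phi> t)"
    and g: "\<And>t. t \<in> S \<Longrightarrow> deriv g t = A t * sin (\<phi> t)"
    and "(A has_real_derivative A') (at u)" "(\<phi> has_real_derivative \<phi>') (at u)"
  shows "deriv f differentiable at u" "deriv g differentiable at u"
    and "deriv f u * deriv (deriv g) u - deriv (deriv f) u * deriv g u = (A u)^2 * \<phi>'"
proof -
  have f': "(deriv f has_real_derivative A' * cos (\<phi> u) - A u * sin (\<phi> u) * \<phi>') (at u)"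
    by (rule has_field_derivative_transform_within_open[OF _ S])
       (use assms in \<open>auto intro!: derivative_eq_intros\<close>)
  have g': "(deriv g has_real_derivative A' * sin (\<phi> u) + A u * cos (\<phi> u) * \<phi>') (at u)"
    by (rule has_field_derivative_transform_within_open[OF _ S])
       (use assms in \<open>auto intro!: derivative_eq_intros\<close>)
  show "deriv f differentiable at u" "deriv g differentiable at u"
    using f' g' real_differentiable_def by blast+
  show "deriv f u * deriv (deriv g) u - deriv (deriv f) u * deriv g u = (A u)^2 * \<phi>'"
    unfolding DERIV_imp_deriv[OF f'] DERIV_imp_deriv[OF g'] f[OF S(2)] g[OF S(2)]
    using sin_cos_squared_add[of "\<phi> u"] by algebra
qed

lemma smooth_on_imp_differentiable:
  assumes "smooth_on f S" "u \<in> S"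
  shows "f differentiable at u" "deriv f differentiable at u"
    and "deriv (deriv f) differentiable at u"
proof -
  have "(deriv ^^ k) f differentiable at u" for k
    using assms unfolding smooth_on_def by blast
  from this[of 0] this[of 1] this[of 2]
  show "f differentiable at u" "deriv f differentiable at u" "deriv (deriv f) differentiable at u"
    by (simp_all add: numeral_2_eq_2)
qed

context
  fixes x1 x2 r :: "real \<Rightarrow> real" and S :: "real set" and u :: real
  assumes S: "open S" "u \<in> S"
    and differentiable_on_S:
      "\<And>t. t \<in> S \<Longrightarrow> x1 differentiable at t \<and> x2 differentiable at t \<and> r differentiable at t"
    and differentiable2: "deriv x1 differentiable at u" "deriv x2 differentiable at u"
      "deriv r differentiable at u"
    and arc_length: "\<And>t. t \<in> S \<Longrightarrow> (deriv x1 t)^2 + (deriv x2 t)^2 - (deriv r t)^2 = 1"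
begin

lemma arc_length_orthogonal:
  "deriv x1 u * deriv (deriv x1) u + deriv x2 u * deriv (deriv x2) u
     = deriv r u * deriv (deriv r) u"
  using constant_quadratic_form_orthogonal[OF S, of "deriv x1" "deriv x2" "-1" "deriv r" 1]
    arc_length differentiable2
  by (simp add: DERIV_deriv_iff_real_differentiable)

lemma pu_rot_surf_at:
  "pu (rot_surf x1 x2 r) u v = vector [deriv x1 u, deriv x2 u, deriv r u * cos v, deriv r u * sin v]"
  using differentiable_on_S[OF S(2)] by (simp add: pu_rot_surf)

lemma pu_pu_rot_surf_at:
  "pu (pu (rot_surf x1 x2 r)) u v = vector [deriv (deriv x1) u, deriv (deriv x2) u,
     deriv (deriv r) u * cos v, deriv (deriv r) u * sin v]"
  by (rule pu_pu_rot_surf[OF S differentiable_on_S differentiable2])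

lemma rot_surf_first_fundamental_form:
  "fE (rot_surf x1 x2 r) u v = 1" "fF (rot_surf x1 x2 r) u v = 0"
  "fG (rot_surf x1 x2 r) u v = - ((r u)^2)"
proof -
  show "fE (rot_surf x1 x2 r) u v = 1"
    unfolding fE_def pu_rot_surf_at nip_vector_4
    using arc_length[OF S(2)] sin_cos_squared_add[of v] by algebra
  show "fF (rot_surf x1 x2 r) u v = 0"
    unfolding fF_def pu_rot_surf_at pv_rot_surf by (simp add: algebra_simps)
  show "fG (rot_surf x1 x2 r) u v = - ((r u)^2)"
    unfolding fG_def pv_rot_surf nip_vector_4 using sin_cos_squared_add[of v] by algebra
qed

lemma rot_surf_lorentz_at:
  assumes "r u \<noteq> 0"
  shows "lorentz_at (rot_surf x1 x2 r) u v"
  by (rule lorentz_at_if_orthogonal_frame)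
     (use assms in \<open>simp_all add: rot_surf_first_fundamental_form\<close>)

lemma rot_surf_normal_parts:
  assumes "r u \<noteq> 0"
  shows "nrm (rot_surf x1 x2 r) u v (pu (pu (rot_surf x1 x2 r)) u v) = pu (pu (rot_surf x1 x2 r)) u v"
    and "nrm (rot_surf x1 x2 r) u v (pv (pv (rot_surf x1 x2 r)) u v)
      = pv (pv (rot_surf x1 x2 r)) u v - (r u * deriv r u) *\<^sub>R pu (rot_surf x1 x2 r) u v"
proof -
  have "nip (pu (pu (rot_surf x1 x2 r)) u v) (pu (rot_surf x1 x2 r) u v) = 0"
    unfolding pu_pu_rot_surf_at pu_rot_surf_at nip_vector_4
    using arc_length_orthogonal sin_cos_squared_add[of v] by algebra
  moreover have "nip (pu (pu (rot_surf x1 x2 r)) u v) (pv (rot_surf x1 x2 r) u v) = 0"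
    unfolding pu_pu_rot_surf_at pv_rot_surf by (simp add: algebra_simps)
  ultimately show "nrm (rot_surf x1 x2 r) u v (pu (pu (rot_surf x1 x2 r)) u v)
      = pu (pu (rot_surf x1 x2 r)) u v"
    unfolding nrm_def Let_def by simp
  have "nip (pv (pv (rot_surf x1 x2 r)) u v) (pu (rot_surf x1 x2 r) u v) = r u * deriv r u"
    unfolding pv_pv_rot_surf pu_rot_surf_at nip_vector_4 using sin_cos_squared_add[of v] by algebra
  moreover have "nip (pv (pv (rot_surf x1 x2 r)) u v) (pv (rot_surf x1 x2 r) u v) = 0"
    unfolding pv_pv_rot_surf pv_rot_surf by (simp add: algebra_simps)
  ultimately show "nrm (rot_surf x1 x2 r) u v (pv (pv (rot_surf x1 x2 r)) u v)
      = pv (pv (rot_surf x1 x2 r)) u v - (r u * deriv r u) *\<^sub>R pu (rot_surf x1 x2 r) u v"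
    unfolding nrm_def Let_def rot_surf_first_fundamental_form using assms by simp
qed

lemma rot_surf_mean_curv:
  assumes "r u \<noteq> 0"
  shows "mean_curv (rot_surf x1 x2 r) u v = (1 / 2) *\<^sub>R (pu (pu (rot_surf x1 x2 r)) u v
    + (deriv r u / r u) *\<^sub>R pu (rot_surf x1 x2 r) u v - (1 / (r u)^2) *\<^sub>R pv (pv (rot_surf x1 x2 r)) u v)"
  unfolding mean_curv_def Let_def rot_surf_first_fundamental_form rot_surf_normal_parts[OF assms]
  using assms by (simp add: algebra_simps divide_simps power2_eq_square)

lemma rot_surf_mean_curv_sq:
  assumes "r u > 0"
  shows "4 * nip (mean_curv (rot_surf x1 x2 r) u v) (mean_curv (rot_surf x1 x2 r) u v)
           * (r u)^2 * (1 + (deriv r u)^2)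
         = (r u)^2 * (deriv x1 u * deriv (deriv x2) u - deriv (deriv x1) u * deriv x2 u)^2
           - (r u * deriv (deriv r) u + (deriv r u)^2 + 1)^2"
proof -
  define H where "H = mean_curv (rot_surf x1 x2 r) u v"
  define X1 X2 R1 where "X1 = deriv x1 u" and "X2 = deriv x2 u" and "R1 = deriv r u"
  define X1' X2' R2 where
    "X1' = deriv (deriv x1) u" and "X2' = deriv (deriv x2) u" and "R2 = deriv (deriv r) u"
  define \<rho> c s where "\<rho> = r u" and "c = cos v" and "s = sin v"
  have \<rho>: "\<rho> > 0" and cs: "c^2 + s^2 = 1"
    using assms unfolding \<rho>_def c_def s_def by simp_all
  have H: "H = vector [(X1' + R1 * X1 / \<rho>) / 2, (X2' + R1 * X2 / \<rho>) / 2,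
      (R2 + (1 + R1^2) / \<rho>) * c / 2, (R2 + (1 + R1^2) / \<rho>) * s / 2]"
    unfolding H_def rot_surf_mean_curv[OF less_imp_neq[OF assms, symmetric]]
      pu_pu_rot_surf_at pu_rot_surf_at pv_pv_rot_surf
    unfolding X1_def X2_def R1_def X1'_def X2'_def R2_def \<rho>_def c_def s_def
    using assms by (simp add: vec_eq_iff forall_4 field_simps power2_eq_square)
  have N: "nip H H
      = ((X1' + R1 * X1 / \<rho>)^2 + (X2' + R1 * X2 / \<rho>)^2 - (R2 + (1 + R1^2) / \<rho>)^2) / 4"
    unfolding H using cs by simp algebra
  have "4 * nip H H * \<rho>^2
      = (\<rho> * X1' + R1 * X1)^2 + (\<rho> * X2' + R1 * X2)^2 - (\<rho> * R2 + 1 + R1^2)^2"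
    unfolding N using \<rho> by (simp add: field_simps power2_eq_square)
  moreover have "X1^2 + X2^2 = 1 + R1^2" "X1 * X1' + X2 * X2' = R1 * R2"
    using arc_length[OF S(2)] arc_length_orthogonal
    unfolding X1_def X2_def R1_def X1'_def X2'_def R2_def by simp_all
  \<comment> \<open>Lagrange's identity for the vectors \<open>(X1, X2)\<close> and \<open>(X1', X2')\<close>\<close>
  ultimately have "4 * nip H H * \<rho>^2 * (1 + R1^2)
      = \<rho>^2 * (X1 * X2' - X1' * X2)^2 - (\<rho> * R2 + R1^2 + 1)^2"
    by algebra
  then show ?thesis
    unfolding H_def X1_def X2_def R1_def X1'_def X2'_def R2_def \<rho>_def .
qed

lemma rot_surf_mean_curv_sq_eq_iff:
  assumes "r u > 0"
  shows "nip (mean_curv (rot_surf x1 x2 r) u v) (mean_curv (rot_surf x1 x2 r) u v) = s * C^2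
    \<longleftrightarrow> Rfun s C r u
      = (r u)^2 * (deriv x1 u * deriv (deriv x2) u - deriv (deriv x1) u * deriv x2 u)^2"
proof -
  have "(r u)^2 * (1 + (deriv r u)^2) > 0"
    using assms by (simp add: add_pos_nonneg)
  moreover have "Rfun s C r u
      - (r u)^2 * (deriv x1 u * deriv (deriv x2) u - deriv (deriv x1) u * deriv x2 u)^2
      = 4 * (s * C^2 - nip (mean_curv (rot_surf x1 x2 r) u v) (mean_curv (rot_surf x1 x2 r) u v))
        * ((r u)^2 * (1 + (deriv r u)^2))"
    using rot_surf_mean_curv_sq[OF assms, of v] unfolding Rfun_def by algebra
  ultimately show ?thesis
    by (smt (verit) mult_eq_0_iff)
qed

end

lemma constant_mean_curv_of_turning_angle:
  fixes r x1 x2 \<phi> :: "real \<Rightarrow> real"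
  assumes I: "open I" "u \<in> I" and r: "smooth_on r I" "r u > 0"
    and \<eta>: "\<eta> \<in> {1, -1}" and R: "Rfun s C r u > 0"
    and \<phi>: "(\<phi> has_real_derivative \<eta> * sqrt (Rfun s C r u) / (r u * (1 + (deriv r u)^2))) (at u)"
    and x1: "\<And>t. t \<in> I \<Longrightarrow> (x1 has_real_derivative sqrt (1 + (deriv r t)^2) * cos (\<phi> t)) (at t)"
    and x2: "\<And>t. t \<in> I \<Longrightarrow> (x2 has_real_derivative sqrt (1 + (deriv r t)^2) * sin (\<phi> t)) (at t)"
  shows "nip (vector_derivative (gen_curve x1 x2 r) (at u))
           (vector_derivative (gen_curve x1 x2 r) (at u)) = 1"
    and "deriv x1 u * deriv (deriv x2) u - deriv (deriv x1) u * deriv x2 u \<noteq> 0"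
    and "lorentz_at (rot_surf x1 x2 r) u v"
    and "nip (mean_curv (rot_surf x1 x2 r) u v) (mean_curv (rot_surf x1 x2 r) u v) = s * C^2"
proof -
  define A where "A t = sqrt (1 + (deriv r t)^2)" for t
  have A2: "(A t)^2 = 1 + (deriv r t)^2" for t
    unfolding A_def by (simp add: add_nonneg_nonneg)
  have dx1: "deriv x1 t = A t * cos (\<phi> t)" and dx2: "deriv x2 t = A t * sin (\<phi> t)" if "t \<in> I" for t
    using x1[OF that] x2[OF that] unfolding A_def by (simp_all add: DERIV_imp_deriv)
  have differentiable: "x1 differentiable at t \<and> x2 differentiable at t \<and> r differentiable at t"
    if "t \<in> I" for t
    using x1[OF that] x2[OF that] smooth_on_imp_differentiable(1)[OF r(1) that]
    by (auto simp: real_differentiable_def)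
  have r': "deriv r differentiable at u"
    by (rule smooth_on_imp_differentiable(2)[OF r(1) I(2)])
  have "(A has_real_derivative deriv r u * deriv (deriv r) u / A u) (at u)"
    unfolding A_def[abs_def]
    by (rule has_real_derivative_sqrt_one_plus_square)
       (use r' in \<open>simp add: DERIV_deriv_iff_real_differentiable\<close>)
  note polar = polar_wronskian[OF I dx1 dx2 this \<phi>]
  have arc_length: "(deriv x1 t)^2 + (deriv x2 t)^2 - (deriv r t)^2 = 1" if "t \<in> I" for t
    unfolding dx1[OF that] dx2[OF that] using A2[of t] sin_cos_squared_add[of "\<phi> t"] by algebra
  have one_plus_r'2: "1 + (deriv r u)^2 > 0"
    by (simp add: add_pos_nonneg)
  have "deriv x1 u * deriv (deriv x2) u - deriv (deriv x1) u * deriv x2 u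
      = (A u)^2 * (\<eta> * sqrt (Rfun s C r u) / (r u * (1 + (deriv r u)^2)))"
    by (rule polar(3))
  also have "\<dots> = \<eta> * sqrt (Rfun s C r u) / r u"
    unfolding A2 using one_plus_r'2 r(2) by simp
  finally have W: "deriv x1 u * deriv (deriv x2) u - deriv (deriv x1) u * deriv x2 u
      = \<eta> * sqrt (Rfun s C r u) / r u" .
  have W2: "Rfun s C r u
      = (r u)^2 * (deriv x1 u * deriv (deriv x2) u - deriv (deriv x1) u * deriv x2 u)^2"
    unfolding W using \<eta> R r(2) by (auto simp: power_divide power_mult_distrib)
  show "deriv x1 u * deriv (deriv x2) u - deriv (deriv x1) u * deriv x2 u \<noteq> 0"
    unfolding W using \<eta> R r(2) by auto
  show "lorentz_at (rot_surf x1 x2 r) u v"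
    using rot_surf_lorentz_at[OF I differentiable polar(1,2) r' arc_length] r(2) by simp
  show "nip (mean_curv (rot_surf x1 x2 r) u v) (mean_curv (rot_surf x1 x2 r) u v) = s * C^2"
    using rot_surf_mean_curv_sq_eq_iff[OF I differentiable polar(1,2) r' arc_length r(2)] W2 by simp
  show "nip (vector_derivative (gen_curve x1 x2 r) (at u))
      (vector_derivative (gen_curve x1 x2 r) (at u)) = 1"
    using arc_length[OF I(2)] differentiable[OF I(2)]
    by (simp add: vector_derivative_gen_curve power2_eq_square)
qed

lemma open_interval_einterval:
  assumes "open_interval I"
  obtains a b :: ereal where "a < b" "I = einterval a b"
proof -
  from assms have I: "is_interval I" "open I" "I \<noteq> {}"
    unfolding open_interval_def by auto
  define a where "a = Inf (ereal ` I)"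
  define b where "b = Sup (ereal ` I)"
  have inside: "a < ereal x \<and> ereal x < b" if x: "x \<in> I" for x
  proof -
    obtain e where e: "e > 0" "ball x e \<subseteq> I"
      using I(2) x open_contains_ball by blast
    have "x - e/2 \<in> I" "x + e/2 \<in> I"
      using e by (auto simp: dist_real_def intro!: subsetD[OF e(2)])
    then have "a \<le> ereal (x - e/2)" "ereal (x + e/2) \<le> b"
      unfolding a_def b_def by (auto intro: Inf_lower Sup_upper)
    moreover have "ereal (x - e/2) < ereal x" "ereal x < ereal (x + e/2)"
      using e(1) by auto
    ultimately show ?thesis
      by (meson order.strict_trans1 order.strict_trans2)
  qed
  have "x \<in> I" if ax: "a < ereal x" and xb: "ereal x < b" for x
  proof -
    obtain y z where "y \<in> I" "ereal y < ereal x" "z \<in> I" "ereal x < ereal z"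
      using ax xb unfolding a_def b_def Inf_less_iff less_Sup_iff by blast
    then show "x \<in> I"
      using I(1) unfolding is_interval_1 by (meson less_eq_ereal_def less_ereal.simps(1) order_less_imp_le)
  qed
  with inside have "I = einterval a b"
    by (auto simp: einterval_def)
  moreover obtain x where "x \<in> I"
    using I(3) by auto
  with inside have "a < b"
    by (meson order.strict_trans)
  ultimately show thesis
    using that by blast
qed

lemma open_interval_antiderivative:
  fixes f :: "real \<Rightarrow> real"
  assumes "open_interval I" "continuous_on I f"
  obtains F where "\<And>x. x \<in> I \<Longrightarrow> (F has_real_derivative f x) (at x)"
proof -
  obtain a b where ab: "a < b" "I = einterval a b"
    using open_interval_einterval[OF assms(1)] by blast
  have "open I"
    using ab(2) by simp
  then have "isCont f x" if "a < ereal x" "ereal x < b" for x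
    using assms(2) that ab(2) by (auto simp: einterval_iff continuous_on_eq_continuous_at)
  then obtain F where "\<And>x. a < ereal x \<Longrightarrow> ereal x < b \<Longrightarrow> (F has_vector_derivative f x) (at x)"
    using einterval_antiderivative[OF ab(1)] by blast
  then show thesis
    using that ab(2) by (auto simp: einterval_iff has_real_derivative_iff_has_vector_derivative)
qed

lemma continuous_nonvanishing_sgn_eq:
  fixes W :: "real \<Rightarrow> real"
  assumes "is_interval I" "continuous_on I W" "\<And>t. t \<in> I \<Longrightarrow> W t \<noteq> 0" "u \<in> I" "u' \<in> I"
  shows "sgn (W u) = sgn (W u')"
proof -
  have "connected (W ` I)"
    by (rule connected_continuous_image[OF assms(2) is_interval_connected[OF assms(1)]])
  then have "z \<in> W ` I" if "x \<in> W ` I" "y \<in> W ` I" "x \<le> z" "z \<le> y" for x y z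
    using that unfolding connected_iff_interval by blast
  moreover have "W u \<in> W ` I" "W u' \<in> W ` I" "0 \<notin> W ` I" "W u \<noteq> 0" "W u' \<noteq> 0"
    using assms(3-5) by auto
  ultimately have "\<not> (W u < 0 \<and> W u' > 0)" "\<not> (W u > 0 \<and> W u' < 0)" "W u \<noteq> 0" "W u' \<noteq> 0"
    by (metis less_imp_le)+
  then show ?thesis
    by (auto simp: sgn_real_def)
qed

lemma unit_circle_angle_lift:
  fixes c d c' d' :: "real \<Rightarrow> real"
  assumes I: "open_interval I"
    and c: "\<And>t. t \<in> I \<Longrightarrow> (c has_real_derivative c' t) (at t)"
    and d: "\<And>t. t \<in> I \<Longrightarrow> (d has_real_derivative d' t) (at t)"
    and unit: "\<And>t. t \<in> I \<Longrightarrow> (c t)^2 + (d t)^2 = 1"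
    and cont: "continuous_on I (\<lambda>t. c t * d' t - c' t * d t)"
  obtains \<phi> where "\<And>t. t \<in> I \<Longrightarrow> c t = cos (\<phi> t)" "\<And>t. t \<in> I \<Longrightarrow> d t = sin (\<phi> t)"
    and "\<And>t. t \<in> I \<Longrightarrow> (\<phi> has_real_derivative c t * d' t - c' t * d t) (at t)"
proof -
  define \<omega> where "\<omega> t = c t * d' t - c' t * d t" for t
  have oI: "open I" and iI: "is_interval I"
    using I unfolding open_interval_def by auto
  obtain F where F: "\<And>t. t \<in> I \<Longrightarrow> (F has_real_derivative \<omega> t) (at t)"
    using open_interval_antiderivative[OF I cont] unfolding \<omega>_def by blast
  obtain u0 where u0: "u0 \<in> I"
    using I unfolding open_interval_def by auto
  obtain \<theta>0 where \<theta>0: "c u0 = cos \<theta>0" "d u0 = sin \<theta>0"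
    using sincos_total_2pi[OF unit[OF u0]] by blast
  define \<phi> where "\<phi> t = F t - F u0 + \<theta>0" for t
  have \<phi>: "(\<phi> has_real_derivative \<omega> t) (at t)" if "t \<in> I" for t
    unfolding \<phi>_def[abs_def] using F[OF that] by (auto intro!: derivative_eq_intros)
  define h where "h t = c t * cos (\<phi> t) + d t * sin (\<phi> t)" for t
  have "(h has_real_derivative 0) (at t within I)" if t: "t \<in> I" for t
  proof -
    have "c t * c' t + d t * d' t + 0 * (c t * c' t) = 0"
      by (rule constant_quadratic_form_orthogonal[OF oI t _ c[OF t] d[OF t] c[OF t]])
         (use unit in simp)
    then have "c' t + d t * \<omega> t = 0" "d' t - c t * \<omega> t = 0"
      using unit[OF t] unfolding \<omega>_def by algebra+
    moreover have "(h has_real_derivative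
        (c' t + d t * \<omega> t) * cos (\<phi> t) + (d' t - c t * \<omega> t) * sin (\<phi> t)) (at t)"
      unfolding h_def[abs_def] using c[OF t] d[OF t] \<phi>[OF t]
      by (auto intro!: derivative_eq_intros simp: algebra_simps)
    ultimately show ?thesis
      by (simp add: has_field_derivative_at_within)
  qed
  then obtain h0 where h0: "\<And>t. t \<in> I \<Longrightarrow> h t = h0"
    using has_field_derivative_zero_constant[OF is_interval_convex[OF iI]] by blast
  have "h u0 = 1"
    unfolding h_def \<phi>_def using \<theta>0 unit[OF u0] by (simp add: power2_eq_square)
  then have "(c t - cos (\<phi> t))^2 + (d t - sin (\<phi> t))^2 = 0" if "t \<in> I" for t
    using h0[OF that] h0[OF u0] unit[OF that] sin_cos_squared_add[of "\<phi> t"]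
    unfolding h_def by algebra
  then show thesis
    using that \<phi> unfolding \<omega>_def by (simp add: sum_power2_eq_zero_iff)
qed

lemma smooth_on_subset: "smooth_on f T \<Longrightarrow> S \<subseteq> T \<Longrightarrow> smooth_on f S"
  unfolding smooth_on_def by blast

lemma arc_length_turning_angle:
  fixes x1 x2 r :: "real \<Rightarrow> real"
  assumes I: "open_interval I"
    and smooth: "smooth_on x1 I" "smooth_on x2 I" "smooth_on r I"
    and arc_length: "\<And>t. t \<in> I \<Longrightarrow> (deriv x1 t)^2 + (deriv x2 t)^2 - (deriv r t)^2 = 1"
  obtains \<phi> where "\<And>t. t \<in> I \<Longrightarrow> deriv x1 t = sqrt (1 + (deriv r t)^2) * cos (\<phi> t)"
    and "\<And>t. t \<in> I \<Longrightarrow> deriv x2 t = sqrt (1 + (deriv r t)^2) * sin (\<phi> t)"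
    and "\<And>t. t \<in> I \<Longrightarrow> (\<phi> has_real_derivative
      (deriv x1 t * deriv (deriv x2) t - deriv (deriv x1) t * deriv x2 t) / (1 + (deriv r t)^2)) (at t)"
proof -
  note differentiable = smooth_on_imp_differentiable[OF smooth(1)]
    smooth_on_imp_differentiable[OF smooth(2)] smooth_on_imp_differentiable[OF smooth(3)]
  define A where "A t = sqrt (1 + (deriv r t)^2)" for t
  have A: "A t > 0" "(A t)^2 = 1 + (deriv r t)^2" for t
    unfolding A_def by (simp_all add: add_pos_nonneg)
  define A' where "A' t = deriv r t * deriv (deriv r) t / A t" for t
  define c d where "c t = deriv x1 t / A t" and "d t = deriv x2 t / A t" for t
  define c' d' where "c' t = (deriv (deriv x1) t * A t - deriv x1 t * A' t) / (A t)^2"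
    and "d' t = (deriv (deriv x2) t * A t - deriv x2 t * A' t) / (A t)^2" for t
  have A': "(A has_real_derivative A' t) (at t)" if "t \<in> I" for t
    unfolding A_def[abs_def] A'_def A_def
    by (rule has_real_derivative_sqrt_one_plus_square)
       (use differentiable[OF that] in \<open>simp add: DERIV_deriv_iff_real_differentiable\<close>)
  have c': "(c has_real_derivative c' t) (at t)" and d': "(d has_real_derivative d' t) (at t)"
    if "t \<in> I" for t
    unfolding c_def[abs_def] d_def[abs_def] c'_def d'_def
    using differentiable[OF that] A'[OF that] A(1)[of t]
    by (auto intro!: derivative_eq_intros simp: DERIV_deriv_iff_real_differentiable[symmetric]
        power2_eq_square)
  have turning: "c t * d' t - c' t * d t
      = (deriv x1 t * deriv (deriv x2) t - deriv (deriv x1) t * deriv x2 t) / (1 + (deriv r t)^2)" for t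
    unfolding c_def d_def c'_def d'_def A(2)[symmetric] using A(1)[of t]
    by (simp add: field_simps power2_eq_square)
  have unit: "(c t)^2 + (d t)^2 = 1" if "t \<in> I" for t
    unfolding c_def d_def using arc_length[OF that] A[of t]
    by (simp add: power_divide add_divide_distrib[symmetric] add_nonneg_eq_0_iff)
  have cont: "continuous_on I (\<lambda>t. c t * d' t - c' t * d t)"
    unfolding turning using differentiable
    by (intro continuous_at_imp_continuous_on ballI continuous_intros differentiable_imp_continuous_within)
       (auto simp: add_nonneg_eq_0_iff)
  obtain \<phi> where \<phi>: "\<And>t. t \<in> I \<Longrightarrow> c t = cos (\<phi> t)" "\<And>t. t \<in> I \<Longrightarrow> d t = sin (\<phi> t)"
    "\<And>t. t \<in> I \<Longrightarrow> (\<phi> has_real_derivative c t * d' t - c' t * d t) (at t)"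
    using unit_circle_angle_lift[OF I c' d' unit cont] by blast
  show thesis
  proof (rule that)
    fix t assume t: "t \<in> I"
    show "deriv x1 t = sqrt (1 + (deriv r t)^2) * cos (\<phi> t)"
      using \<phi>(1)[OF t] A(1)[of t] unfolding c_def A_def by (simp add: divide_eq_eq)
    show "deriv x2 t = sqrt (1 + (deriv r t)^2) * sin (\<phi> t)"
      using \<phi>(2)[OF t] A(1)[of t] unfolding d_def A_def by (simp add: divide_eq_eq)
    show "(\<phi> has_real_derivative
      (deriv x1 t * deriv (deriv x2) t - deriv (deriv x1) t * deriv x2 t) / (1 + (deriv r t)^2)) (at t)"
      using \<phi>(3)[OF t] unfolding turning .
  qed
qed

lemma turning_angle_of_constant_mean_curv:
  fixes I :: "real set" and r x1 x2 :: "real \<Rightarrow> real"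
  assumes I: "open_interval I"
    and smooth: "smooth_on x1 I" "smooth_on x2 I" "smooth_on r I"
    and r: "\<And>u. u \<in> I \<Longrightarrow> r u > 0"
    and arc_length: "\<And>u. u \<in> I \<Longrightarrow> (deriv x1 u)^2 + (deriv x2 u)^2 - (deriv r u)^2 = 1"
    and W_nonzero: "\<And>u. u \<in> I \<Longrightarrow>
      deriv x1 u * deriv (deriv x2) u - deriv (deriv x1) u * deriv x2 u \<noteq> 0"
    and K: "K \<noteq> 0"
      "\<And>u. u \<in> I \<Longrightarrow> nip (mean_curv (rot_surf x1 x2 r) u 0) (mean_curv (rot_surf x1 x2 r) u 0) = K"
  shows "\<exists>C s \<eta> \<phi>. C \<noteq> 0 \<and> s \<in> {1, -1} \<and> \<eta> \<in> {1, -1} \<and>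
         (\<forall>u\<in>I. Rfun s C r u > 0) \<and>
         (\<forall>u\<in>I. (\<phi> has_real_derivative
                 \<eta> * sqrt (Rfun s C r u) / (r u * (1 + (deriv r u)^2))) (at u)) \<and>
         (\<forall>u\<in>I. deriv x1 u = sqrt (1 + (deriv r u)^2) * cos (\<phi> u)) \<and>
         (\<forall>u\<in>I. deriv x2 u = sqrt (1 + (deriv r u)^2) * sin (\<phi> u))"
proof -
  have oI: "open I" and iI: "is_interval I"
    using I unfolding open_interval_def by auto
  note differentiable = smooth_on_imp_differentiable[OF smooth(1)]
    smooth_on_imp_differentiable[OF smooth(2)] smooth_on_imp_differentiable[OF smooth(3)]
  define W where "W t = deriv x1 t * deriv (deriv x2) t - deriv (deriv x1) t * deriv x2 t" for t
  define s :: real where "s = (if K > 0 then 1 else -1)"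
  define C where "C = sqrt \<bar>K\<bar>"
  have C: "C \<noteq> 0" "s * C^2 = K"
    unfolding s_def C_def using K(1) by auto
  have differentiable_on_I:
    "\<And>t. t \<in> I \<Longrightarrow> x1 differentiable at t \<and> x2 differentiable at t \<and> r differentiable at t"
    using differentiable by blast
  have R: "Rfun s C r u = (r u)^2 * (W u)^2" if u: "u \<in> I" for u
    using rot_surf_mean_curv_sq_eq_iff[OF oI u differentiable_on_I differentiable(2,5,8)[OF u]
        arc_length r[OF u], of 0 s C] K(2)[OF u]
    unfolding W_def C(2) by simp
  obtain \<phi> where \<phi>: "\<And>u. u \<in> I \<Longrightarrow> deriv x1 u = sqrt (1 + (deriv r u)^2) * cos (\<phi> u)"
    "\<And>u. u \<in> I \<Longrightarrow> deriv x2 u = sqrt (1 + (deriv r u)^2) * sin (\<phi> u)"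
    "\<And>u. u \<in> I \<Longrightarrow> (\<phi> has_real_derivative W u / (1 + (deriv r u)^2)) (at u)"
    using arc_length_turning_angle[OF I smooth arc_length] unfolding W_def by blast
  obtain u0 where u0: "u0 \<in> I"
    using I unfolding open_interval_def by auto
  define \<eta> where "\<eta> = sgn (W u0)"
  have "continuous_on I W"
    unfolding W_def using differentiable
    by (intro continuous_at_imp_continuous_on ballI continuous_intros differentiable_imp_continuous_within) auto
  then have "sgn (W u) = \<eta>" if "u \<in> I" for u
    unfolding \<eta>_def by (rule continuous_nonvanishing_sgn_eq[OF iI _ W_nonzero[folded W_def] that u0])
  then have \<eta>: "\<eta> * \<bar>W u\<bar> = W u" if "u \<in> I" for u
    using sgn_mult_abs[of "W u"] that by simp
  show ?thesis
  proof (intro exI conjI ballI)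
    show "C \<noteq> 0" "s \<in> {1, -1}" "\<eta> \<in> {1, -1}"
      using C W_nonzero[OF u0] unfolding s_def \<eta>_def W_def by (auto simp: sgn_real_def)
    fix u assume u: "u \<in> I"
    show "Rfun s C r u > 0"
      using W_nonzero[OF u] r[OF u] unfolding R[OF u] W_def by simp
    show "deriv x1 u = sqrt (1 + (deriv r u)^2) * cos (\<phi> u)"
      "deriv x2 u = sqrt (1 + (deriv r u)^2) * sin (\<phi> u)"
      using \<phi>(1,2)[OF u] .
    have "\<eta> * sqrt (Rfun s C r u) / (r u * (1 + (deriv r u)^2)) = W u / (1 + (deriv r u)^2)"
      unfolding R[OF u] using r[OF u] \<eta>[OF u] by (simp add: real_sqrt_mult)
    then show "(\<phi> has_real_derivative \<eta> * sqrt (Rfun s C r u) / (r u * (1 + (deriv r u)^2))) (at u)"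
      using \<phi>(3)[OF u] by simp
  qed
qed

theorem theorem3p1:
  shows
  "(\<forall>(I::real set) (r::real\<Rightarrow>real) (C::real) (\<eta>::real) (s::real) (\<phi>::real\<Rightarrow>real)
       (x1::real\<Rightarrow>real) (x2::real\<Rightarrow>real).
      open_interval I \<and> smooth_on r I \<and> (\<forall>u\<in>I. r u > 0) \<and> C \<noteq> 0 \<and>
      \<eta> \<in> {1, -1} \<and> s \<in> {1, -1} \<and> (\<forall>u\<in>I. Rfun s C r u > 0) \<and>
      (\<forall>u\<in>I. (\<phi> has_real_derivative
                 \<eta> * sqrt (Rfun s C r u) / (r u * (1 + (deriv r u)^2))) (at u)) \<and>
      (\<forall>u\<in>I. (x1 has_real_derivative sqrt (1 + (deriv r u)^2) * cos (\<phi> u)) (at u)) \<and>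
      (\<forall>u\<in>I. (x2 has_real_derivative sqrt (1 + (deriv r u)^2) * sin (\<phi> u)) (at u))
    \<longrightarrow>
      (\<forall>u\<in>I.
         nip (vector_derivative (gen_curve x1 x2 r) (at u))
             (vector_derivative (gen_curve x1 x2 r) (at u)) > 0 \<and>
         nip (vector_derivative (gen_curve x1 x2 r) (at u))
             (vector_derivative (gen_curve x1 x2 r) (at u)) = 1 \<and>
         deriv x1 u * deriv (deriv x2) u - deriv (deriv x1) u * deriv x2 u \<noteq> 0) \<and>
      (\<forall>u\<in>I. \<forall>v. lorentz_at (rot_surf x1 x2 r) u v \<and>
         nip (mean_curv (rot_surf x1 x2 r) u v) (mean_curv (rot_surf x1 x2 r) u v) = s * C^2))
   \<and>
   (\<forall>(J::real set) (I::real set) (r::real\<Rightarrow>real) (x1::real\<Rightarrow>real) (x2::real\<Rightarrow>real).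
      open_interval J \<and> open_interval I \<and> I \<subseteq> J \<and>
      smooth_on x1 J \<and> smooth_on x2 J \<and> smooth_on r J \<and> (\<forall>u\<in>J. r u > 0) \<and>
      (\<forall>u\<in>J. (deriv x1 u)^2 + (deriv x2 u)^2 - (deriv r u)^2 = 1) \<and>
      (\<forall>u\<in>I. deriv x1 u * deriv (deriv x2) u - deriv (deriv x1) u * deriv x2 u \<noteq> 0) \<and>
      (\<exists>K. K \<noteq> 0 \<and> (\<forall>u\<in>I. \<forall>v\<in>{0..<2*pi}.
         nip (mean_curv (rot_surf x1 x2 r) u v) (mean_curv (rot_surf x1 x2 r) u v) = K))
    \<longrightarrow>
      (\<exists>C s \<eta> \<phi>. C \<noteq> 0 \<and> s \<in> {1, -1} \<and> \<eta> \<in> {1, -1} \<and>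
         (\<forall>u\<in>I. Rfun s C r u > 0) \<and>
         (\<forall>u\<in>I. (\<phi> has_real_derivative
                 \<eta> * sqrt (Rfun s C r u) / (r u * (1 + (deriv r u)^2))) (at u)) \<and>
         (\<forall>u\<in>I. deriv x1 u = sqrt (1 + (deriv r u)^2) * cos (\<phi> u)) \<and>
         (\<forall>u\<in>I. deriv x2 u = sqrt (1 + (deriv r u)^2) * sin (\<phi> u))))"
proof (rule conjI; intro allI impI; elim conjE)
  fix I r C \<eta> s \<phi> and x1 x2 :: "real \<Rightarrow> real"
  assume I: "open_interval I" and r: "smooth_on r I" "\<forall>u\<in>I. r u > 0" and \<eta>: "\<eta> \<in> {1, -1}"
    and R: "\<forall>u\<in>I. Rfun s C r u > 0"
    and \<phi>: "\<forall>u\<in>I. (\<phi> has_real_derivative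
      \<eta> * sqrt (Rfun s C r u) / (r u * (1 + (deriv r u)^2))) (at u)"
    and x1: "\<forall>u\<in>I. (x1 has_real_derivative sqrt (1 + (deriv r u)^2) * cos (\<phi> u)) (at u)"
    and x2: "\<forall>u\<in>I. (x2 has_real_derivative sqrt (1 + (deriv r u)^2) * sin (\<phi> u)) (at u)"
  have "open I"
    using I by (simp add: open_interval_def)
  note forward = constant_mean_curv_of_turning_angle[OF this _ r(1) r(2)[rule_format] \<eta>
      R[rule_format] \<phi>[rule_format] x1[rule_format] x2[rule_format]]
  show "(\<forall>u\<in>I.
      nip (vector_derivative (gen_curve x1 x2 r) (at u)) (vector_derivative (gen_curve x1 x2 r) (at u)) > 0 \<and>
      nip (vector_derivative (gen_curve x1 x2 r) (at u)) (vector_derivative (gen_curve x1 x2 r) (at u)) = 1 \<and>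
      deriv x1 u * deriv (deriv x2) u - deriv (deriv x1) u * deriv x2 u \<noteq> 0) \<and>
    (\<forall>u\<in>I. \<forall>v. lorentz_at (rot_surf x1 x2 r) u v \<and>
      nip (mean_curv (rot_surf x1 x2 r) u v) (mean_curv (rot_surf x1 x2 r) u v) = s * C^2)"
    using forward by simp
next
  fix J I r and x1 x2 :: "real \<Rightarrow> real"
  assume I: "open_interval I" and IJ: "I \<subseteq> J"
    and smooth: "smooth_on x1 J" "smooth_on x2 J" "smooth_on r J" and r: "\<forall>u\<in>J. r u > 0"
    and arc_length: "\<forall>u\<in>J. (deriv x1 u)^2 + (deriv x2 u)^2 - (deriv r u)^2 = 1"
    and W: "\<forall>u\<in>I. deriv x1 u * deriv (deriv x2) u - deriv (deriv x1) u * deriv x2 u \<noteq> 0"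
    and "\<exists>K. K \<noteq> 0 \<and> (\<forall>u\<in>I. \<forall>v\<in>{0..<2*pi}.
      nip (mean_curv (rot_surf x1 x2 r) u v) (mean_curv (rot_surf x1 x2 r) u v) = K)"
  then obtain K where K: "K \<noteq> 0"
    "\<And>u. u \<in> I \<Longrightarrow> nip (mean_curv (rot_surf x1 x2 r) u 0) (mean_curv (rot_surf x1 x2 r) u 0) = K"
    by auto
  show "\<exists>C s \<eta> \<phi>. C \<noteq> 0 \<and> s \<in> {1, -1} \<and> \<eta> \<in> {1, -1} \<and> (\<forall>u\<in>I. Rfun s C r u > 0) \<and>
      (\<forall>u\<in>I. (\<phi> has_real_derivative \<eta> * sqrt (Rfun s C r u) / (r u * (1 + (deriv r u)^2))) (at u)) \<and>
      (\<forall>u\<in>I. deriv x1 u = sqrt (1 + (deriv r u)^2) * cos (\<phi> u)) \<and>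
      (\<forall>u\<in>I. deriv x2 u = sqrt (1 + (deriv r u)^2) * sin (\<phi> u))"
    using turning_angle_of_constant_mean_curv[OF I smooth_on_subset[OF smooth(1) IJ]
        smooth_on_subset[OF smooth(2) IJ] smooth_on_subset[OF smooth(3) IJ] _ _ _ K] IJ r arc_length W
    by blast
qed

end
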